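(* Let $(R,\mathfrak{m})$ satisfy condition $\bigstar$, and let $S$ be a maximal element of the set of proper subrings of $R$ having the same residue field as $R$. Then $S$ contains the ideal $\mathfrak{m}^2+pR$, the maximal ideal $\mathfrak{m}_S$ of $S$ is an ideal of $R$, and $\mathfrak{m}^2+pR\subseteq\mathfrak{m}_S$.
   Context: All rings are commutative and unital. Condition $\bigstar$ on a ring $(R,\mathfrak{m})$: $R$ is a local ring (unique maximal ideal $\mathfrak{m}$, not necessarily Noetherian) of characteristic $p^N$ for a prime $p$ and some $N\ge 1$, with finite residue field $R/\mathfrak{m}\cong\mathbb{F}_q$, and $\mathfrak{m}$ is a nilpotent ideal. Any subring $S$ of $R$ is local with maximal ideal $\mathfrak{m}_S=\mathfrak{m}\cap S$, and its residue field $S/\mathfrak{m}_S$ is naturally a subfield of $R/\mathfrak{m}$; "same residue field as $R$" means equality under this identification. *)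

theory Defs
  imports "HOL-Algebra.Algebra" "HOL-Computational_Algebra.Primes"
begin

definition ring_char :: "('a, 'b) ring_scheme \<Rightarrow> nat" where
  "ring_char R =
     (if \<exists>n::nat. n > 0 \<and> [n] \<cdot>\<^bsub>R\<^esub> \<one>\<^bsub>R\<^esub> = \<zero>\<^bsub>R\<^esub>
      then (LEAST n::nat. n > 0 \<and> [n] \<cdot>\<^bsub>R\<^esub> \<one>\<^bsub>R\<^esub> = \<zero>\<^bsub>R\<^esub>)
      else 0)"

fun ideal_power :: "('a, 'b) ring_scheme \<Rightarrow> 'a set \<Rightarrow> nat \<Rightarrow> 'a set" where
  "ideal_power R I 0 = carrier R"
| "ideal_power R I (Suc n) = ideal_prod R I (ideal_power R I n)"

definition nilpotent_ideal :: "('a, 'b) ring_scheme \<Rightarrow> 'a set \<Rightarrow> bool" where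
  "nilpotent_ideal R I \<longleftrightarrow> (\<exists>n. ideal_power R I n = {\<zero>\<^bsub>R\<^esub>})"

definition local_ring_with :: "('a, 'b) ring_scheme \<Rightarrow> 'a set \<Rightarrow> bool" where
  "local_ring_with R m \<longleftrightarrow> maximalideal m R \<and> (\<forall>I. maximalideal I R \<longrightarrow> I = m)"

definition cond_star :: "('a, 'b) ring_scheme \<Rightarrow> 'a set \<Rightarrow> nat \<Rightarrow> bool" where
  "cond_star R m p \<longleftrightarrow>
     cring R \<and> local_ring_with R m \<and> Factorial_Ring.prime p \<and>
     (\<exists>N::nat. N \<ge> 1 \<and> ring_char R = p ^ N) \<and>
     finite (carrier (R Quot m)) \<and>
     nilpotent_ideal R m"

(* The subring S has the same residue field as R: the natural embedding
   S/(m \<inter> S) \<rightarrow> R/m is onto, i.e. every residue class of R/m meets S. *)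
definition same_residue_field :: "('a, 'b) ring_scheme \<Rightarrow> 'a set \<Rightarrow> 'a set \<Rightarrow> bool" where
  "same_residue_field R m S \<longleftrightarrow> (\<forall>x \<in> carrier R. \<exists>s \<in> S. x \<ominus>\<^bsub>R\<^esub> s \<in> m)"

definition proper_subrings_same_residue :: "('a, 'b) ring_scheme \<Rightarrow> 'a set \<Rightarrow> 'a set set" where
  "proper_subrings_same_residue R m =
     {T. subring T R \<and> T \<noteq> carrier R \<and> same_residue_field R m T}"

end

theory Submission
  imports Defs
begin

text \<open>Since \<open>p\<^sup>N = 0\<close> and \<open>m\<close> is prime, \<open>p \<in> m\<close>, so \<open>I = m\<^sup>2 + pR\<close> is an ideal inside \<open>m\<close>
  and \<open>S + I\<close> is a subring with the same residue field. It is proper: if \<open>S + I = R\<close>, then,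
  as \<open>cp \<equiv> sp\<close> modulo \<open>m\<^sup>2\<close> whenever \<open>c \<equiv> s\<close> modulo \<open>m\<close>, already \<open>S + m\<^sup>2 = R\<close>; multiplying
  approximations gives \<open>m \<subseteq> S + m\<^sup>k\<close> for all \<open>k\<close>, and nilpotency forces \<open>S = R\<close>.
  Maximality yields \<open>I \<subseteq> S\<close>, and then \<open>xa = sa + (x - s)a \<in> S\<close> for \<open>a \<in> m \<inter> S\<close>, \<open>x \<equiv> s\<close>
  modulo \<open>m\<close>, shows that \<open>m \<inter> S\<close> is an ideal of \<open>R\<close>.\<close>

lemma add_pow_ring_char_one:
  assumes "ring_char R > 0"
  shows "[ring_char R] \<cdot>\<^bsub>R\<^esub> \<one>\<^bsub>R\<^esub> = \<zero>\<^bsub>R\<^esub>"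
proof -
  have ex: "\<exists>n::nat. n > 0 \<and> [n] \<cdot>\<^bsub>R\<^esub> \<one>\<^bsub>R\<^esub> = \<zero>\<^bsub>R\<^esub>"
    using assms unfolding ring_char_def by (auto split: if_splits)
  show ?thesis using LeastI_ex[OF ex] ex unfolding ring_char_def by simp
qed

context cring
begin

lemma add_pow_one_nat_pow:
  fixes k n :: nat
  shows "(add_pow R k \<one>) [^] n = add_pow R (k ^ n) \<one>"
proof (induction n)
  case (Suc n)
  have "(add_pow R k \<one>) [^] Suc n = add_pow R (k ^ n) \<one> \<otimes> add_pow R k \<one>" using Suc by simp
  also have "\<dots> = add_pow R k (add_pow R (k ^ n) \<one>)"
    using add_pow_rdistr[of "add_pow R (k ^ n) \<one>" \<one> k] by simp
  also have "\<dots> = add_pow R (k ^ Suc n) \<one>"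
    using add.nat_pow_pow[of \<one> k "k ^ n"] by (simp add: mult.commute)
  finally show ?case .
qed simp

lemma primeideal_mem_of_pow_mem:
  assumes P: "primeideal P R" and a: "a \<in> carrier R"
  shows "a [^] Suc n \<in> P \<Longrightarrow> a \<in> P"
proof (induction n)
  case (Suc n)
  then have "a [^] Suc n \<otimes> a \<in> P" by (simp only: nat_pow_Suc)
  then show ?case using primeideal.I_prime[OF P nat_pow_closed[OF a] a] Suc.IH by blast
qed (simp add: a)

lemma add_pow_one_mem_subring: "subring S R \<Longrightarrow> add_pow R (k :: nat) \<one> \<in> S"
  by (induction k) (auto simp: subringE)

lemma set_add_subset_additive_subgroup:
  assumes "additive_subgroup U R" "A \<subseteq> U" "B \<subseteq> U"
  shows "A <+>\<^bsub>R\<^esub> B \<subseteq> U"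
proof
  fix x assume "x \<in> A <+>\<^bsub>R\<^esub> B"
  then obtain a b where "a \<in> U" "b \<in> U" "x = a \<oplus> b"
    using assms(2,3) unfolding set_add_def' by blast
  then show "x \<in> U" using additive_subgroup.a_closed[OF assms(1)] by simp
qed

lemma set_add_supset_left:
  assumes "A \<subseteq> carrier R" "\<zero> \<in> B"
  shows "A \<subseteq> A <+>\<^bsub>R\<^esub> B"
proof
  fix a assume a: "a \<in> A"
  then have "a \<oplus> \<zero> \<in> A <+>\<^bsub>R\<^esub> B" using assms(2) unfolding set_add_def' by blast
  then show "a \<in> A <+>\<^bsub>R\<^esub> B" using a assms(1) by auto
qed

lemma set_add_supset_right:
  assumes "\<zero> \<in> A" "B \<subseteq> carrier R"
  shows "B \<subseteq> A <+>\<^bsub>R\<^esub> B"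
proof
  fix b assume b: "b \<in> B"
  then have "\<zero> \<oplus> b \<in> A <+>\<^bsub>R\<^esub> B" using assms(1) unfolding set_add_def' by blast
  then show "b \<in> A <+>\<^bsub>R\<^esub> B" using b assms(2) by auto
qed

lemma subring_is_additive_subgroup: "subring S R \<Longrightarrow> additive_subgroup S R"
  by (simp add: additive_subgroup.intro subring.axioms(1))

lemma subring_set_add_ideal:
  assumes S: "subring S R" and J: "ideal J R"
  shows "subring (S <+>\<^bsub>R\<^esub> J) R"
proof -
  have Sc: "S \<subseteq> carrier R" using subringE(1)[OF S] .
  have Jc: "J \<subseteq> carrier R" using ideal.Icarr[OF J] by blast
  have add: "additive_subgroup (S <+>\<^bsub>R\<^esub> J) R"
    using add_additive_subgroups[OF subring_is_additive_subgroup[OF S] ideal.axioms(1)[OF J]] .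
  show ?thesis
  proof (rule subringI)
    show "S <+>\<^bsub>R\<^esub> J \<subseteq> carrier R" using set_add_closed[OF Sc Jc] .
    show "\<one> \<in> S <+>\<^bsub>R\<^esub> J"
      using set_add_supset_left[OF Sc additive_subgroup.zero_closed[OF ideal.axioms(1)[OF J]]]
        subringE(3)[OF S] by blast
  next
    fix h assume "h \<in> S <+>\<^bsub>R\<^esub> J"
    then show "\<ominus> h \<in> S <+>\<^bsub>R\<^esub> J" by (rule additive_subgroup.a_inv_closed[OF add])
  next
    fix h1 h2 assume "h1 \<in> S <+>\<^bsub>R\<^esub> J" "h2 \<in> S <+>\<^bsub>R\<^esub> J"
    then show "h1 \<oplus> h2 \<in> S <+>\<^bsub>R\<^esub> J" by (rule additive_subgroup.a_closed[OF add])
  next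
    fix h1 h2 assume "h1 \<in> S <+>\<^bsub>R\<^esub> J" "h2 \<in> S <+>\<^bsub>R\<^esub> J"
    then obtain s1 j1 s2 j2 where s: "s1 \<in> S" "s2 \<in> S" and j: "j1 \<in> J" "j2 \<in> J"
      and h: "h1 = s1 \<oplus> j1" "h2 = s2 \<oplus> j2"
      unfolding set_add_def' by blast
    have c: "s1 \<in> carrier R" "s2 \<in> carrier R" "j1 \<in> carrier R" "j2 \<in> carrier R"
      using s j Sc Jc by auto
    have "h1 \<otimes> h2 = s1 \<otimes> s2 \<oplus> (s1 \<otimes> j2 \<oplus> j1 \<otimes> h2)"
      unfolding h using c by (simp add: l_distr r_distr a_ac)
    moreover have "s1 \<otimes> s2 \<in> S" using subringE(6)[OF S s] .
    moreover have "s1 \<otimes> j2 \<oplus> j1 \<otimes> h2 \<in> J"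
    proof (rule additive_subgroup.a_closed[OF ideal.axioms(1)[OF J]])
      show "s1 \<otimes> j2 \<in> J" using ideal.I_l_closed[OF J j(2) c(1)] .
      show "j1 \<otimes> h2 \<in> J" using ideal.I_r_closed[OF J j(1)] c unfolding h by simp
    qed
    ultimately show "h1 \<otimes> h2 \<in> S <+>\<^bsub>R\<^esub> J" unfolding set_add_def' by blast
  qed
qed

lemma ideal_power_is_ideal: "ideal m R \<Longrightarrow> ideal (ideal_power R m k) R"
  by (induction k) (auto intro: oneideal ideal_prod_is_ideal)

lemma ideal_power_one: "ideal m R \<Longrightarrow> ideal_power R m 1 = m"
  using ideal_prod_one[of m] by (simp add: One_nat_def)

lemma ideal_power_Suc_subset:
  "ideal m R \<Longrightarrow> ideal_power R m (Suc k) \<subseteq> m \<inter> ideal_power R m k"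
  using ideal_prod_inter[of m "ideal_power R m k", OF _ ideal_power_is_ideal[of m k]] by simp

lemma approx_subring_ideal_prod_step:
  assumes m: "ideal m R" and J: "ideal J R" and Jm: "J \<subseteq> m" and S: "subring S R"
    and m_sq: "m \<subseteq> S <+>\<^bsub>R\<^esub> m \<cdot> m" and m_J: "m \<subseteq> S <+>\<^bsub>R\<^esub> J"
  shows "m \<subseteq> S <+>\<^bsub>R\<^esub> m \<cdot> J"
proof -
  have mJ: "ideal (m \<cdot> J) R" using ideal_prod_is_ideal[OF m J] .
  define U where "U = S <+>\<^bsub>R\<^esub> m \<cdot> J"
  have U: "subring U R" unfolding U_def using subring_set_add_ideal[OF S mJ] .
  have SU: "S \<subseteq> U" and mJU: "m \<cdot> J \<subseteq> U"
    unfolding U_def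
    using set_add_supset_left[OF subringE(1)[OF S] additive_subgroup.zero_closed[OF ideal.axioms(1)[OF mJ]]]
      set_add_supset_right[OF subringE(2)[OF S] ideal_prod_in_carrier[OF m J]] by auto
  have "m \<cdot> m \<subseteq> U"
  proof
    fix x assume "x \<in> m \<cdot> m"
    then show "x \<in> U"
    proof (induction x rule: ideal_prod.induct)
      case (prod a b)
      obtain s z where s: "s \<in> S" and z: "z \<in> J" and a: "a = s \<oplus> z"
        using m_J prod(1) unfolding set_add_def' by blast
      obtain t w where t: "t \<in> S" and w: "w \<in> J" and b: "b = t \<oplus> w"
        using m_J prod(2) unfolding set_add_def' by blast
      have c: "s \<in> carrier R" "z \<in> carrier R" "t \<in> carrier R" "w \<in> carrier R"
        using s z t w subringE(1)[OF S] ideal.Icarr[OF J] by auto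
      have "s = a \<oplus> \<ominus> z" using c unfolding a by (simp add: a_assoc r_neg)
      moreover have "\<ominus> z \<in> m"
        using additive_subgroup.a_inv_closed[OF ideal.axioms(1)[OF m]] z Jm by blast
      ultimately have sm: "s \<in> m"
        using additive_subgroup.a_closed[OF ideal.axioms(1)[OF m] prod(1)] by simp
      \<comment> \<open>\<open>s = a - z\<close> lies in \<open>m\<close>, so both \<open>s w\<close> and \<open>z b\<close> lie in \<open>m \<cdot> J\<close>.\<close>
      have "a \<otimes> b = s \<otimes> t \<oplus> (s \<otimes> w \<oplus> b \<otimes> z)"
        using c unfolding a b by (simp add: l_distr r_distr a_ac m_comm)
      moreover have "s \<otimes> t \<in> U" using subringE(6)[OF S s t] SU by blast
      moreover have "s \<otimes> w \<oplus> b \<otimes> z \<in> U"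
        using additive_subgroup.a_closed[OF ideal.axioms(1)[OF mJ]]
          ideal_prod.prod[OF sm w] ideal_prod.prod[OF prod(2) z] mJU by blast
      ultimately show ?case using subringE(7)[OF U] by metis
    next
      case (sum x y)
      then show ?case using subringE(7)[OF U] by blast
    qed
  qed
  then have "S <+>\<^bsub>R\<^esub> m \<cdot> m \<subseteq> U"
    using SU set_add_subset_additive_subgroup[OF subring_is_additive_subgroup[OF U]] by blast
  with m_sq show ?thesis unfolding U_def by (rule order_trans)
qed

lemma subring_eq_carrier_of_dense_mod_square:
  assumes m: "ideal m R" and nil: "nilpotent_ideal R m" and S: "subring S R"
    and dense: "carrier R \<subseteq> S <+>\<^bsub>R\<^esub> m \<cdot> m"
  shows "S = carrier R"
proof -
  obtain n where n: "ideal_power R m n = {\<zero>}" using nil unfolding nilpotent_ideal_def by blast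
  have m_sq: "m \<subseteq> S <+>\<^bsub>R\<^esub> m \<cdot> m" using dense ideal.Icarr[OF m] by blast
  have approx: "m \<subseteq> S <+>\<^bsub>R\<^esub> ideal_power R m (Suc k)" for k
  proof (induction k)
    case 0
    show ?case using set_add_supset_right[OF subringE(2)[OF S]] ideal.Icarr[OF m] ideal_power_one[OF m]
      by auto
  next
    case (Suc k)
    have "ideal_power R m (Suc k) \<subseteq> m" using ideal_power_Suc_subset[OF m] by blast
    from approx_subring_ideal_prod_step[OF m ideal_power_is_ideal[OF m] this S m_sq Suc]
    show ?case by simp
  qed
  have "m \<subseteq> S"
  proof
    fix y assume "y \<in> m"
    then obtain s z where s: "s \<in> S" and z: "z \<in> ideal_power R m (Suc n)" and y: "y = s \<oplus> z"
      using approx unfolding set_add_def' by blast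
    have "z = \<zero>" using z ideal_power_Suc_subset[OF m, of n] n by blast
    then show "y \<in> S" using s subringE(1)[OF S] y by auto
  qed
  then have "m \<cdot> m \<subseteq> S" using ideal_prod_inter[OF m m] by blast
  then have "S <+>\<^bsub>R\<^esub> m \<cdot> m \<subseteq> S"
    using set_add_subset_additive_subgroup[OF subring_is_additive_subgroup[OF S]] by blast
  then show ?thesis using dense subringE(1)[OF S] by blast
qed

lemma cgenideal_subset_set_add_square:
  assumes m: "ideal m R" and S: "subring S R" and res: "same_residue_field R m S"
    and qm: "q \<in> m" and qS: "q \<in> S"
  shows "PIdl q \<subseteq> S <+>\<^bsub>R\<^esub> m \<cdot> m"
proof
  fix x assume "x \<in> PIdl q"
  then obtain c where c: "c \<in> carrier R" and x: "x = c \<otimes> q" unfolding cgenideal_def by blast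
  obtain s where s: "s \<in> S" and cs: "c \<ominus> s \<in> m" using res c unfolding same_residue_field_def by blast
  have sc: "s \<in> carrier R" and qc: "q \<in> carrier R" using s qS subringE(1)[OF S] by auto
  have "s \<otimes> q \<oplus> (c \<ominus> s) \<otimes> q \<in> S <+>\<^bsub>R\<^esub> m \<cdot> m"
    using subringE(6)[OF S s qS] ideal_prod.prod[OF cs qm] unfolding set_add_def' by blast
  moreover have "s \<otimes> q \<oplus> (c \<ominus> s) \<otimes> q = x"
    unfolding x using c sc qc by algebra
  ultimately show "x \<in> S <+>\<^bsub>R\<^esub> m \<cdot> m" by simp
qed

lemma maximal_same_residue_subring_contains:
  assumes m: "ideal m R" and nil: "nilpotent_ideal R m" and qm: "q \<in> m" and qS: "q \<in> S"
    and S_in: "S \<in> proper_subrings_same_residue R m"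
    and S_max: "\<forall>T \<in> proper_subrings_same_residue R m. S \<subseteq> T \<longrightarrow> T = S"
  shows "m \<cdot> m <+>\<^bsub>R\<^esub> PIdl q \<subseteq> S"
proof -
  have S: "subring S R" and S_proper: "S \<noteq> carrier R" and res: "same_residue_field R m S"
    using S_in unfolding proper_subrings_same_residue_def by auto
  have qc: "q \<in> carrier R" using qm ideal.Icarr[OF m] by blast
  have mm: "ideal (m \<cdot> m) R" using ideal_prod_is_ideal[OF m m] .
  define I where "I = m \<cdot> m <+>\<^bsub>R\<^esub> PIdl q"
  have I: "ideal I R" unfolding I_def using add_ideals[OF mm cgenideal_ideal[OF qc]] .
  define T where "T = S <+>\<^bsub>R\<^esub> I"
  have T: "subring T R" unfolding T_def using subring_set_add_ideal[OF S I] .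
  have ST: "S \<subseteq> T" and IT: "I \<subseteq> T"
    unfolding T_def
    using set_add_supset_left[OF subringE(1)[OF S] additive_subgroup.zero_closed[OF ideal.axioms(1)[OF I]]]
      set_add_supset_right[OF subringE(2)[OF S] subsetI[OF ideal.Icarr[OF I]]] by auto
  have T_res: "same_residue_field R m T" using res ST unfolding same_residue_field_def by blast
  have "T \<noteq> carrier R"
  proof
    assume T_all: "T = carrier R"
    define U where "U = S <+>\<^bsub>R\<^esub> m \<cdot> m"
    have U: "additive_subgroup U R"
      unfolding U_def using subring_is_additive_subgroup[OF subring_set_add_ideal[OF S mm]] .
    have SU: "S \<subseteq> U" and mmU: "m \<cdot> m \<subseteq> U"
      unfolding U_def
      using set_add_supset_left[OF subringE(1)[OF S] additive_subgroup.zero_closed[OF ideal.axioms(1)[OF mm]]]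
        set_add_supset_right[OF subringE(2)[OF S] ideal_prod_in_carrier[OF m m]] by auto
    have "I \<subseteq> U"
      unfolding I_def using set_add_subset_additive_subgroup[OF U mmU]
        cgenideal_subset_set_add_square[OF m S res qm qS] unfolding U_def by blast
    then have "carrier R \<subseteq> S <+>\<^bsub>R\<^esub> m \<cdot> m"
      using T_all set_add_subset_additive_subgroup[OF U SU] unfolding T_def U_def by blast
    then show False
      using subring_eq_carrier_of_dense_mod_square[OF m nil S] S_proper by blast
  qed
  then have "T = S"
    using S_max T T_res ST unfolding proper_subrings_same_residue_def by blast
  then show ?thesis using IT unfolding I_def by blast
qed

lemma ideal_inter_subring_of_square_subset:
  assumes m: "ideal m R" and S: "subring S R" and res: "same_residue_field R m S"
    and mm_S: "m \<cdot> m \<subseteq> S"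
  shows "ideal (m \<inter> S) R"
proof (rule idealI[OF ring_axioms])
  show "subgroup (m \<inter> S) (add_monoid R)"
    using add.subgroups_Inter_pair[OF additive_subgroup.a_subgroup[OF ideal.axioms(1)[OF m]]
        subring.axioms(1)[OF S]] .
next
  fix a x assume a: "a \<in> m \<inter> S" and x: "x \<in> carrier R"
  obtain s where s: "s \<in> S" and xs: "x \<ominus> s \<in> m"
    using res x unfolding same_residue_field_def by blast
  have ac: "a \<in> carrier R" and sc: "s \<in> carrier R" using a s ideal.Icarr[OF m] subringE(1)[OF S] by auto
  have "x \<otimes> a = s \<otimes> a \<oplus> (x \<ominus> s) \<otimes> a" using x sc ac by algebra
  moreover have "(x \<ominus> s) \<otimes> a \<in> S" using ideal_prod.prod[OF xs] a mm_S by blast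
  ultimately have "x \<otimes> a \<in> S" using subringE(6,7)[OF S] s a by auto
  moreover have "x \<otimes> a \<in> m" using ideal.I_l_closed[OF m _ x] a by blast
  ultimately show "x \<otimes> a \<in> m \<inter> S" by blast
  then show "a \<otimes> x \<in> m \<inter> S" using m_comm[OF x ac] by simp
qed

lemma maximal_same_residue_subring_structure:
  assumes m: "ideal m R" and nil: "nilpotent_ideal R m" and qm: "q \<in> m" and qS: "q \<in> S"
    and S_in: "S \<in> proper_subrings_same_residue R m"
    and S_max: "\<forall>T \<in> proper_subrings_same_residue R m. S \<subseteq> T \<longrightarrow> T = S"
  shows "m \<cdot> m <+>\<^bsub>R\<^esub> PIdl q \<subseteq> S \<and> ideal (m \<inter> S) R \<and> m \<cdot> m <+>\<^bsub>R\<^esub> PIdl q \<subseteq> m \<inter> S"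
proof -
  have S: "subring S R" and res: "same_residue_field R m S"
    using S_in unfolding proper_subrings_same_residue_def by blast+
  have IS: "m \<cdot> m <+>\<^bsub>R\<^esub> PIdl q \<subseteq> S"
    using maximal_same_residue_subring_contains[OF m nil qm qS S_in S_max] .
  have Im: "m \<cdot> m <+>\<^bsub>R\<^esub> PIdl q \<subseteq> m"
    using set_add_subset_additive_subgroup[OF ideal.axioms(1)[OF m]]
      ideal_prod_inter[OF m m] cgenideal_minimal[OF m qm] by blast
  have "\<zero> \<in> PIdl q"
    using additive_subgroup.zero_closed[OF ideal.axioms(1)[OF cgenideal_ideal]] qm ideal.Icarr[OF m]
    by blast
  then have "m \<cdot> m \<subseteq> S" using IS set_add_supset_left[OF ideal_prod_in_carrier[OF m m]] by blast
  then have "ideal (m \<inter> S) R" using ideal_inter_subring_of_square_subset[OF m S res] by blast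
  with IS Im show ?thesis by blast
qed

end

lemma cond_star_char_mem:
  assumes "cond_star R m p"
  shows "[p] \<cdot>\<^bsub>R\<^esub> \<one>\<^bsub>R\<^esub> \<in> m"
proof -
  interpret cring R using assms unfolding cond_star_def by blast
  obtain N where N: "N \<ge> 1" and char: "ring_char R = p ^ N"
    using assms unfolding cond_star_def by blast
  have P: "primeideal m R"
    using assms maximalideal_prime unfolding cond_star_def local_ring_with_def by blast
  have "p > 0" using assms prime_gt_0_nat unfolding cond_star_def by blast
  then have "add_pow R (p ^ N) \<one>\<^bsub>R\<^esub> = \<zero>\<^bsub>R\<^esub>" using add_pow_ring_char_one[of R] char by simp
  moreover have "\<zero>\<^bsub>R\<^esub> \<in> m"
    using additive_subgroup.zero_closed[OF ideal.axioms(1)[OF primeideal.axioms(1)[OF P]]] .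
  moreover have "Suc (N - 1) = N" using N by simp
  ultimately have "(add_pow R p \<one>\<^bsub>R\<^esub>) [^]\<^bsub>R\<^esub> Suc (N - 1) \<in> m"
    using add_pow_one_nat_pow[of p N] by metis
  then show ?thesis by (rule primeideal_mem_of_pow_mem[OF P, rotated]) simp
qed

theorem lemma22:
  fixes R :: "('a, 'b) ring_scheme" and m S :: "'a set" and p :: nat
  assumes star: "cond_star R m p"
    and S_in: "S \<in> proper_subrings_same_residue R m"
    and S_max: "\<forall>T \<in> proper_subrings_same_residue R m. S \<subseteq> T \<longrightarrow> T = S"
  shows "(m \<cdot>\<^bsub>R\<^esub> m) <+>\<^bsub>R\<^esub> (PIdl\<^bsub>R\<^esub> ([p] \<cdot>\<^bsub>R\<^esub> \<one>\<^bsub>R\<^esub>)) \<subseteq> S \<and>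
         ideal (m \<inter> S) R \<and>
         (m \<cdot>\<^bsub>R\<^esub> m) <+>\<^bsub>R\<^esub> (PIdl\<^bsub>R\<^esub> ([p] \<cdot>\<^bsub>R\<^esub> \<one>\<^bsub>R\<^esub>)) \<subseteq> m \<inter> S"
proof -
  interpret cring R using star unfolding cond_star_def by blast
  have m: "ideal m R" and nil: "nilpotent_ideal R m"
    using star maximalideal.axioms(1) unfolding cond_star_def local_ring_with_def by blast+
  have "subring S R" using S_in unfolding proper_subrings_same_residue_def by blast
  then have "[p] \<cdot>\<^bsub>R\<^esub> \<one>\<^bsub>R\<^esub> \<in> S" by (rule add_pow_one_mem_subring)
  with cond_star_char_mem[OF star] show ?thesis
    using maximal_same_residue_subring_structure[OF m nil _ _ S_in S_max] by blast
qed

end
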